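(* Let $u\in\mathbb R$, $\vartheta_1\in[0,\pi/2]$, $\varphi_1\in\mathbb R$, and put $x=\cos\vartheta_1\cosh(u+i\varphi_1)$. If $\lambda\in\mathbb C$ satisfies $\cosh\sqrt{\lambda+u^2}-x=0$, then $\operatorname{Re}\lambda\le0$.
   Context: $\cosh\sqrt{\zeta}$ denotes the entire function $\sum_{m\ge0}\zeta^m/(2m)!$ of $\zeta\in\mathbb C$ (independent of the choice of square root). *)

theory Defs
  imports "HOL-Analysis.Analysis"
begin

text \<open>cosh sqrt z as the entire function sum_{m>=0} z^m/(2m)!.\<close>
definition cosh_sqrt :: "complex \<Rightarrow> complex" where
  "cosh_sqrt z = (\<Sum>m. z ^ m / of_nat (fact (2 * m)))"

end

theory Submission
  imports Defs
begin

text \<open>The points \<open>cosh w\<close> with fixed \<open>Re w = a\<close> form the ellipse with foci \<open>\<plusminus>1\<close> whose focal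
  distances sum to \<open>2 cosh a\<close>. With \<open>w\<^sup>2 = \<lambda> + u\<^sup>2\<close>, the hypothesis says that \<open>cosh w\<close> is the point
  \<open>cosh (u + i\<phi>\<^sub>1)\<close> of the ellipse of parameter \<open>u\<close> shrunk towards the centre by \<open>cos \<vartheta>\<^sub>1 \<in> [0,1]\<close>.
  Since the focal-distance sum is convex and minimal at the centre, shrinking does not increase it,
  so \<open>cosh (Re w) \<le> cosh u\<close>, i.e. \<open>(Re w)\<^sup>2 \<le> u\<^sup>2\<close>, and then
  \<open>Re \<lambda> = (Re w)\<^sup>2 - (Im w)\<^sup>2 - u\<^sup>2 \<le> 0\<close>.\<close>

lemma cosh_sqrt_power2: "cosh_sqrt (w\<^sup>2) = cosh w"
proof -
  have "(\<lambda>n. if even n then w ^ n /\<^sub>R fact n else 0) sums cosh w"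
    by (rule cosh_converges)
  also have "?this \<longleftrightarrow> (\<lambda>n. if even (2*n) then w ^ (2*n) /\<^sub>R fact (2*n) else 0) sums cosh w"
    by (subst sums_mono_reindex[of "\<lambda>n. 2*n", symmetric])
       (auto simp: strict_mono_def elim!: evenE)
  finally have "(\<lambda>n. (w\<^sup>2) ^ n / of_nat (fact (2*n))) sums cosh w"
    by (simp add: power_mult[symmetric] scaleR_conv_of_real field_simps mult.commute)
  then show ?thesis
    unfolding cosh_sqrt_def by (simp add: sums_iff)
qed

lemma Re_cosh_complex: "Re (cosh z) = cosh (Re z) * cos (Im z)"
  by (simp add: cosh_conv_cos Re_cos cosh_def)

lemma Im_cosh_complex: "Im (cosh z) = sinh (Re z) * sin (Im z)"
  by (simp add: cosh_conv_cos Im_cos sinh_def field_simps)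

lemma norm_cosh_minus_one: "cmod (cosh z - 1) = cosh (Re z) - cos (Im z)"
proof -
  have "(cmod (cosh z - 1))\<^sup>2 = (cosh (Re z) * cos (Im z) - 1)\<^sup>2 + (sinh (Re z))\<^sup>2 * (sin (Im z))\<^sup>2"
    by (simp add: cmod_power2 Re_cosh_complex Im_cosh_complex power_mult_distrib)
  also have "\<dots> = (cosh (Re z) - cos (Im z))\<^sup>2"
    unfolding sinh_square_eq sin_squared_eq by (simp add: algebra_simps power2_eq_square)
  finally show ?thesis
    using cos_le_one[of "Im z"] cosh_real_ge_1[of "Re z"] by (simp add: power2_eq_iff_nonneg)
qed

lemma norm_cosh_plus_one: "cmod (cosh z + 1) = cosh (Re z) + cos (Im z)"
proof -
  have "(cmod (cosh z + 1))\<^sup>2 = (cosh (Re z) * cos (Im z) + 1)\<^sup>2 + (sinh (Re z))\<^sup>2 * (sin (Im z))\<^sup>2"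
    by (simp add: cmod_power2 Re_cosh_complex Im_cosh_complex power_mult_distrib)
  also have "\<dots> = (cosh (Re z) + cos (Im z))\<^sup>2"
    unfolding sinh_square_eq sin_squared_eq by (simp add: algebra_simps power2_eq_square)
  finally show ?thesis
    using cos_ge_minus_one[of "Im z"] cosh_real_ge_1[of "Re z"] by (simp add: power2_eq_iff_nonneg)
qed

lemma focal_sum_norm_cosh: "cmod (cosh z - 1) + cmod (cosh z + 1) = 2 * cosh (Re z)"
  by (simp add: norm_cosh_minus_one norm_cosh_plus_one)

text \<open>The sum of the distances to two foci \<open>\<plusminus>e\<close> is convex and at least \<open>2 \<parallel>e\<parallel>\<close>, its value at the
  centre.\<close>
lemma focal_sum_scaleR_le:
  fixes p e :: "'a::real_normed_vector" and c :: real
  assumes "0 \<le> c" "c \<le> 1"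
  shows "norm (c *\<^sub>R p - e) + norm (c *\<^sub>R p + e) \<le> norm (p - e) + norm (p + e)"
proof -
  have "norm (c *\<^sub>R p - e) = norm (c *\<^sub>R (p - e) - (1 - c) *\<^sub>R e)"
    by (simp add: algebra_simps)
  also have "\<dots> \<le> c * norm (p - e) + (1 - c) * norm e"
    using norm_triangle_ineq4[of "c *\<^sub>R (p - e)" "(1 - c) *\<^sub>R e"] assms by simp
  finally have minus: "norm (c *\<^sub>R p - e) \<le> c * norm (p - e) + (1 - c) * norm e" .
  have "norm (c *\<^sub>R p + e) = norm (c *\<^sub>R (p + e) + (1 - c) *\<^sub>R e)"
    by (simp add: algebra_simps)
  also have "\<dots> \<le> c * norm (p + e) + (1 - c) * norm e"
    using norm_triangle_ineq[of "c *\<^sub>R (p + e)" "(1 - c) *\<^sub>R e"] assms by simp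
  finally have plus: "norm (c *\<^sub>R p + e) \<le> c * norm (p + e) + (1 - c) * norm e" .
  have "2 * norm e = norm ((p + e) - (p - e))"
    by (simp flip: scaleR_2)
  also have "\<dots> \<le> norm (p - e) + norm (p + e)"
    using norm_triangle_ineq4[of "p + e" "p - e"] by simp
  finally have "(1 - c) * (2 * norm e) \<le> (1 - c) * (norm (p - e) + norm (p + e))"
    using assms by (intro mult_left_mono) auto
  with minus plus show ?thesis
    by (simp add: algebra_simps)
qed

lemma abs_Re_le_if_cosh_eq_scaled_cosh:
  fixes w z :: complex and c :: real
  assumes "0 \<le> c" "c \<le> 1" and "cosh w = of_real c * cosh z"
  shows "\<bar>Re w\<bar> \<le> \<bar>Re z\<bar>"
proof -
  have "2 * cosh (Re w) = cmod (c *\<^sub>R cosh z - 1) + cmod (c *\<^sub>R cosh z + 1)"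
    unfolding focal_sum_norm_cosh[symmetric] assms(3) scaleR_conv_of_real ..
  also have "\<dots> \<le> cmod (cosh z - 1) + cmod (cosh z + 1)"
    using assms(1,2) by (rule focal_sum_scaleR_le)
  also have "\<dots> = 2 * cosh (Re z)"
    by (rule focal_sum_norm_cosh)
  finally have "cosh \<bar>Re w\<bar> \<le> cosh \<bar>Re z\<bar>"
    by (simp only: cosh_real_abs)
  then show ?thesis
    using cosh_real_nonneg_le_iff abs_ge_zero by blast
qed

theorem lemma4p44:
  fixes u th1 ph1 :: real and lam :: complex
  assumes "0 \<le> th1" and "th1 \<le> pi / 2"
    and "cosh_sqrt (lam + complex_of_real (u\<^sup>2)) - complex_of_real (cos th1) * cosh (complex_of_real u + \<i> * complex_of_real ph1) = 0"
  shows "Re lam \<le> 0"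
proof -
  define w where "w = csqrt (lam + complex_of_real (u\<^sup>2))"
  have w2: "w\<^sup>2 = lam + complex_of_real (u\<^sup>2)"
    unfolding w_def by simp
  have cosh_w: "cosh w = complex_of_real (cos th1) * cosh (complex_of_real u + \<i> * complex_of_real ph1)"
    using assms(3) unfolding w2[symmetric] cosh_sqrt_power2 by simp
  have "0 \<le> cos th1"
    using assms(1,2) by (auto intro: cos_ge_zero)
  then have "\<bar>Re w\<bar> \<le> \<bar>Re (of_real u + \<i> * of_real ph1)\<bar>"
    using cos_le_one cosh_w by (rule abs_Re_le_if_cosh_eq_scaled_cosh)
  then have "(Re w)\<^sup>2 \<le> u\<^sup>2"
    by (simp add: abs_le_square_iff)
  moreover have "Re lam = (Re w)\<^sup>2 - (Im w)\<^sup>2 - u\<^sup>2"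
    using arg_cong[OF w2, of Re] by (simp add: power2_eq_square)
  ultimately show ?thesis
    using zero_le_power2[of "Im w"] by linarith
qed

end
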